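(* Let $\mathcal H$ be a separable Hilbert space and $\rho$ a distribution on $(X,Y)\in\mathcal H\times\mathbb R$ with covariance operator $H=\mathbb E[X\otimes X]$, having eigenpairs $(\lambda_i,v_i)$ with $\lambda_i>0$. Assume the noiseless model: there is $\theta_*\in\mathcal H$ with $\langle\theta_*,X\rangle=Y$ $\rho$-a.s.; let $M_0=\theta_*\theta_*^\top$. Assume (capacity condition) there are $\alpha\in(0,1)$ and a finite $R_\alpha>0$ with $\mathbb E[\langle X,H^{-\alpha}X\rangle XX^\top]\preccurlyeq R_\alpha H$, and (source condition) there is $\beta>-1$ with $C_\beta:=\operatorname{tr}(H^{-\beta}M_0)=\sum_i\lambda_i^{-\beta}\langle v_i,\theta_*\rangle^2<+\infty$. Let $\xi_\alpha=\sum_{n\ge1}n^{-(1+\alpha)}$ and let $\gamma>0$ satisfy $\gamma^{1-\alpha}\le(32\xi_\alpha R_\alpha)^{-1}$. Let $(x_t,y_t)_{t\ge0}$ be i.i.d. from $\rho$ and run SGD $\theta_0=0$, $\theta_{t+1}=\theta_t-\gamma(\langle\theta_t,x_t\rangle-y_t)x_t$. Then for every $T\ge3$, $$\mathbb E\,\mathcal R(\theta_T)\le 2C_\beta\Big(\frac{1+\beta}{\gamma}\Big)^{1+\beta}\frac{1}{T^{1+\min(\alpha,\beta)}},$$ where $\mathcal R(\theta)=\tfrac12\mathbb E_\rho(\langle\theta,X\rangle-Y)^2$.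
   Context: $\preccurlyeq$ is the Loewner order; powers $H^{-\alpha}$, $H^{-\beta}$ are defined via the eigendecomposition of $H$. *)

theory Defs
  imports "HOL-Analysis.Analysis" "HOL-Probability.Probability"
begin

definition cov_op :: "('a::{real_inner,banach,second_countable_topology} \<times> real) measure \<Rightarrow> 'a \<Rightarrow> 'a" where
  "cov_op \<rho> u = (\<integral>z. (u \<bullet> fst z) *\<^sub>R fst z \<partial>\<rho>)"

definition risk :: "('a::real_inner \<times> real) measure \<Rightarrow> 'a \<Rightarrow> real" where
  "risk \<rho> \<theta> = (1/2) * (\<integral>z. (\<theta> \<bullet> fst z - snd z)\<^sup>2 \<partial>\<rho>)"

text \<open>Quadratic form <x, H^(-a) x> with H^(-a) defined through the eigendecomposition
  (v i, lam i), i in I, of H; value in [0, infinity].\<close>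
definition neg_pow_qf :: "'i set \<Rightarrow> ('i \<Rightarrow> real) \<Rightarrow> ('i \<Rightarrow> 'a::real_inner) \<Rightarrow> real \<Rightarrow> 'a \<Rightarrow> ennreal" where
  "neg_pow_qf I lam v a x = (\<Sum>\<^sub>\<infinity>i\<in>I. ennreal (lam i powr (-a) * (x \<bullet> v i)\<^sup>2))"

text \<open>Loewner order written out on quadratic forms:
  E[<X,H^(-a)X> X X^T] \<preccurlyeq> R H  iff  for all u,
  E[<X,H^(-a)X> <u,X>^2] \<le> R <u, H u> = R E[<u,X>^2].\<close>
definition capacity_cond :: "('a::real_inner \<times> real) measure \<Rightarrow> 'i set \<Rightarrow> ('i \<Rightarrow> real) \<Rightarrow> ('i \<Rightarrow> 'a) \<Rightarrow> real \<Rightarrow> real \<Rightarrow> bool" where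
  "capacity_cond \<rho> I lam v a R \<longleftrightarrow>
     (\<forall>u. (\<integral>\<^sup>+ z. neg_pow_qf I lam v a (fst z) * ennreal ((u \<bullet> fst z)\<^sup>2) \<partial>\<rho>)
            \<le> ennreal R * (\<integral>\<^sup>+ z. ennreal ((u \<bullet> fst z)\<^sup>2) \<partial>\<rho>))"

definition source_const :: "'i set \<Rightarrow> ('i \<Rightarrow> real) \<Rightarrow> ('i \<Rightarrow> 'a::real_inner) \<Rightarrow> real \<Rightarrow> 'a \<Rightarrow> real" where
  "source_const I lam v b \<theta> = (\<Sum>\<^sub>\<infinity>i\<in>I. lam i powr (-b) * (v i \<bullet> \<theta>)\<^sup>2)"

definition xi :: "real \<Rightarrow> real" where
  "xi a = (\<Sum>n. real (Suc n) powr (-(1 + a)))"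

fun sgd :: "real \<Rightarrow> (nat \<Rightarrow> 'a::real_inner \<times> real) \<Rightarrow> nat \<Rightarrow> 'a" where
  "sgd \<gamma> z 0 = 0"
| "sgd \<gamma> z (Suc t) = sgd \<gamma> z t - (\<gamma> * (sgd \<gamma> z t \<bullet> fst (z t) - snd (z t))) *\<^sub>R fst (z t)"

end

(*
  Write eta_t = theta_t - theta_* and, for weights w on the eigenbasis,
  Q_w(eta) = sum_i w_i <eta, v_i>^2, so that the expected risk is E Q_lambda(eta_T) / 2.
  In the noiseless model eta_{t+1} = (I - gamma x_t x_t^T) eta_t.  Averaging over the fresh
  sample, the drift multiplies each weight by (1 - 2 gamma lambda_i), while the capacity
  condition bounds the fluctuation by gamma^2 K R_alpha Q_lambda(eta_t) whenever
  w_i <= K lambda_i^(-alpha).  The decayed weights lambda_i (1 - 2 gamma lambda_i)^k satisfy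
  this with K of order (gamma (k+1))^(-(1+alpha)), so unrolling the recursion yields a
  Volterra inequality
    a_t <= F_t + sum_{u<t} gamma^(1-alpha) R_alpha (t-u)^(-(1+alpha)) a_u
  for a_t = E Q_lambda(eta_t), where F_t = O(C_beta t^(-r)), r = 1 + min(alpha, beta), comes
  from the source condition.  The step size condition makes the convolution of the kernel
  with (t+1)^(-r) at most (t+1)^(-r) / 4, so 4 F_t / 3 is a supersolution and dominates a_t.
*)
theory Submission
  imports Defs
begin

section \<open>Nonnegative sums and integrals\<close>

lemma infsum_ennreal_from_nat_into:
  fixes f :: "'i \<Rightarrow> ennreal"
  assumes "countable I" "infinite I"
  shows "(\<Sum>\<^sub>\<infinity>i\<in>I. f i) = (\<Sum>n. f (from_nat_into I n))"
proof -
  have "(\<Sum>\<^sub>\<infinity>i\<in>I. f i) = (\<Sum>\<^sub>\<infinity>n\<in>UNIV. f (from_nat_into I n))"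
    using bij_betw_from_nat_into[OF assms] by (rule infsum_reindex_bij_betw[symmetric])
  also have "\<dots> = (\<Sum>n. f (from_nat_into I n))"
    by (rule sums_unique[OF has_sum_imp_sums[OF has_sum_infsum]]) (simp add: nonneg_summable_on_complete)
  finally show ?thesis .
qed

lemma borel_measurable_infsum_ennreal[measurable (raw)]:
  fixes f :: "'i \<Rightarrow> 'b \<Rightarrow> ennreal"
  assumes "countable I" and "\<And>i. i \<in> I \<Longrightarrow> f i \<in> borel_measurable M"
  shows "(\<lambda>x. \<Sum>\<^sub>\<infinity>i\<in>I. f i x) \<in> borel_measurable M"
proof (cases "finite I")
  case False
  then show ?thesis
    using assms by (simp add: infsum_ennreal_from_nat_into from_nat_into infinite_imp_nonempty)
qed (use assms in simp)

lemma nn_integral_infsum_ennreal: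
  fixes f :: "'i \<Rightarrow> 'b \<Rightarrow> ennreal"
  assumes "countable I" and "\<And>i. i \<in> I \<Longrightarrow> f i \<in> borel_measurable M"
  shows "(\<integral>\<^sup>+x. (\<Sum>\<^sub>\<infinity>i\<in>I. f i x) \<partial>M) = (\<Sum>\<^sub>\<infinity>i\<in>I. \<integral>\<^sup>+x. f i x \<partial>M)"
proof (cases "finite I")
  case True
  then show ?thesis using assms by (simp add: nn_integral_sum)
next
  case False
  then show ?thesis
    using assms by (simp add: infsum_ennreal_from_nat_into nn_integral_suminf from_nat_into infinite_imp_nonempty)
qed

lemma infsum_ennreal_cmult:
  fixes f :: "'i \<Rightarrow> ennreal"
  assumes "countable I"
  shows "(\<Sum>\<^sub>\<infinity>i\<in>I. c * f i) = c * (\<Sum>\<^sub>\<infinity>i\<in>I. f i)"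
  using assms by (cases "finite I") (simp_all add: infsum_ennreal_from_nat_into sum_distrib_left)

lemma member_le_infsum_ennreal:
  fixes f :: "'i \<Rightarrow> ennreal"
  assumes "j \<in> I"
  shows "f j \<le> (\<Sum>\<^sub>\<infinity>i\<in>I. f i)"
  using infsum_mono_neutral[of f "{j}" f I] assms by (simp add: nonneg_summable_on_complete)

lemma ennreal_infsum:
  fixes f :: "'i \<Rightarrow> real"
  assumes "f summable_on I" and "\<And>i. i \<in> I \<Longrightarrow> 0 \<le> f i"
  shows "ennreal (\<Sum>\<^sub>\<infinity>i\<in>I. f i) = (\<Sum>\<^sub>\<infinity>i\<in>I. ennreal (f i))"
proof -
  have "ennreal (\<Sum>\<^sub>\<infinity>i\<in>I. f i) = (SUP F\<in>{F. finite F \<and> F \<subseteq> I}. ennreal (sum f F))"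
    using assms by (rule infsum_nonneg_is_SUPREMUM_ennreal)
  also have "\<dots> = (SUP F\<in>{F. finite F \<and> F \<subseteq> I}. (\<Sum>i\<in>F. ennreal (f i)))"
    using assms(2) by (intro SUP_cong refl) (auto intro!: sum_ennreal[symmetric])
  also have "\<dots> = (\<Sum>\<^sub>\<infinity>i\<in>I. ennreal (f i))"
    by (rule nonneg_infsum_complete[symmetric]) simp
  finally show ?thesis .
qed

lemma nn_integral_add_integrable_le:
  fixes g h :: "'b \<Rightarrow> real"
  assumes g: "integrable M g" and h[measurable]: "h \<in> borel_measurable M" "\<And>x. 0 \<le> h x"
    and gh: "\<And>x. 0 \<le> g x + h x"
  shows "(\<integral>\<^sup>+x. ennreal (g x + h x) \<partial>M) \<le> ennreal (\<integral>x. g x \<partial>M) + (\<integral>\<^sup>+x. ennreal (h x) \<partial>M)"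
proof (cases "(\<integral>\<^sup>+x. ennreal (h x) \<partial>M) = \<infinity>")
  case False
  then have h_int: "integrable M h"
    using h by (intro integrableI_nonneg) (auto simp: top.not_eq_extremum)
  have "(\<integral>\<^sup>+x. ennreal (g x + h x) \<partial>M) = ennreal ((\<integral>x. g x \<partial>M) + (\<integral>x. h x \<partial>M))"
    using g h_int gh by (simp add: nn_integral_eq_integral)
  also have "\<dots> \<le> ennreal (\<integral>x. g x \<partial>M) + ennreal (\<integral>x. h x \<partial>M)"
    by (cases "0 \<le> (\<integral>x. g x \<partial>M)") (auto simp: h integral_nonneg_AE ennreal_neg intro!: ennreal_leI)
  also have "ennreal (\<integral>x. h x \<partial>M) = (\<integral>\<^sup>+x. ennreal (h x) \<partial>M)"
    using h_int h by (simp add: nn_integral_eq_integral)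
  finally show ?thesis .
qed simp

lemma source_const_nonneg: "0 \<le> source_const I lam v \<beta> \<theta>"
  unfolding source_const_def by (rule infsum_nonneg) simp

section \<open>Elementary estimates\<close>

lemma powr_mult_exp_le:
  fixes x q c :: real
  assumes x: "x > 0" and q: "q > 0" and c: "c > 0"
  shows "x powr q * exp (- c * x) \<le> (q / (exp 1 * c)) powr q"
proof -
  have "ln (c * x / q) \<le> c * x / q - 1"
    using x q c by (intro ln_le_minus_one) simp
  then have "q * ln (c * x / q) \<le> c * x - q"
    using q by (simp add: field_simps)
  then have key: "q * ln x - c * x \<le> q * (ln q - 1 - ln c)"
    using x q c by (simp add: ln_mult ln_div algebra_simps)
  have "x powr q * exp (- c * x) = exp (q * ln x - c * x)"
    using x by (simp add: powr_def exp_diff exp_minus field_simps)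
  also have "\<dots> \<le> exp (q * (ln q - 1 - ln c))"
    using key by simp
  also have "\<dots> = (q / (exp 1 * c)) powr q"
    using q c by (simp add: powr_def ln_div ln_mult ac_simps)
  finally show ?thesis .
qed

lemma powr_mult_one_minus_power_le:
  fixes x q :: real
  assumes x: "0 < x" "x \<le> 1/2" and q: "q > 0" and k: "k \<ge> 1"
  shows "x powr q * (1 - 2*x)^k \<le> (q / (2 * exp 1 * k)) powr q"
proof -
  have "(1 - 2*x)^k \<le> exp (- 2*x)^k"
    using x exp_ge_add_one_self[of "-2*x"] by (intro power_mono) auto
  also have "\<dots> = exp (- (2*k) * x)"
    by (simp add: exp_of_nat_mult[symmetric] ac_simps)
  finally have "x powr q * (1 - 2*x)^k \<le> x powr q * exp (- (2*k) * x)"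
    by (intro mult_left_mono) auto
  also have "\<dots> \<le> (q / (2 * exp 1 * k)) powr q"
    using powr_mult_exp_le[of x q "2*k"] x q k by (simp add: ac_simps)
  finally show ?thesis .
qed

lemma powr_mult_one_minus_power_mult_powr_le_one:
  fixes x q :: real
  assumes x: "0 < x" "x \<le> 1/2" and q: "0 < q" "q \<le> 2"
  shows "x powr q * (1 - 2*x)^k * real (k+1) powr q \<le> 1"
proof (cases "k = 0")
  case True
  then show ?thesis using x q by (simp add: powr_le1)
next
  case False
  then have k: "real k \<ge> 1" by simp
  have "x powr q * (1 - 2*x)^k * real (k+1) powr q
      \<le> (q / (2 * exp 1 * k)) powr q * real (k+1) powr q"
    using powr_mult_one_minus_power_le[OF x q(1), of k] False by (intro mult_right_mono) auto
  also have "\<dots> = (q / exp 1 * ((k+1) / (2*k))) powr q"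
    using q k by (simp add: powr_mult[symmetric] field_simps)
  also have "\<dots> \<le> 1"
  proof (rule powr_le1)
    have "q / exp 1 \<le> 1"
      using q exp_ge_add_one_self[of 1] by simp
    moreover have "(k+1) / (2*k) \<le> 1"
      using k by (simp add: field_simps)
    ultimately show "\<bar>q / exp 1 * ((k+1) / (2*k))\<bar> \<le> 1"
      using mult_mono[of "q / exp 1" 1 "(k+1) / (2*k)" 1] q k by simp
  qed (use q k in auto)
  finally show ?thesis .
qed

lemma powr_mult_one_minus_power_mult_powr_le:
  fixes x p r :: real
  assumes x: "0 < x" "x \<le> 1/32" and p: "p > 0" and r: "0 < r" "r \<le> p"
  shows "x powr p * (1 - 2*x)^k * real (k+1) powr r \<le> 3 * p powr p"
proof (cases "k = 0")
  case True
  have "ln (1/(32*p)) \<le> 1/(32*p) - 1"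
    using p by (intro ln_le_minus_one) simp
  then have "p * ln (1/(32*p)) \<le> 1"
    using p by (simp add: field_simps)
  then have "(1/(32*p)) powr p \<le> exp 1"
    using p by (simp add: powr_def ac_simps)
  also have "exp 1 \<le> (3::real)"
    using exp_le by simp
  finally have "(1/32) powr p \<le> 3 * p powr p"
    using p by (simp add: powr_divide powr_mult divide_le_eq ac_simps)
  moreover have "x powr p \<le> (1/32) powr p"
    using x p by (intro powr_mono2) auto
  ultimately show ?thesis using True by simp
next
  case False
  then have k: "real k \<ge> 1" by simp
  have "real (k+1) powr r \<le> (2 * k) powr r"
    using k r by (intro powr_mono2) auto
  also have "\<dots> \<le> (2 * k) powr p"
    using k r by (intro powr_mono) auto
  finally have "x powr p * (1 - 2*x)^k * real (k+1) powr r
      \<le> (p / (2 * exp 1 * k)) powr p * (2 * k) powr p"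
    using powr_mult_one_minus_power_le[of x p k] x p False by (intro mult_mono) auto
  also have "\<dots> = (p / exp 1) powr p"
    using k p by (simp add: powr_mult[symmetric])
  also have "\<dots> \<le> 3 * p powr p"
    using p ge_one_powr_ge_zero[of "exp 1" p] by (simp add: powr_divide divide_le_eq)
  finally show ?thesis .
qed

lemma powr_mult_powr_le_sum:
  fixes a b r s :: real
  assumes ab: "1 \<le> a" "1 \<le> b" and r: "0 < r" "r \<le> s"
  shows "a powr (-s) * b powr (-r) * (a + b) powr r \<le> 2 powr r * (a powr (-s) + b powr (-s))"
proof (cases "b \<le> a")
  case True
  have "a powr (-s) * b powr (-r) * (a + b) powr r \<le> a powr (-s) * b powr (-r) * (2*a) powr r"
    using ab r True by (intro mult_left_mono powr_mono2) auto
  also have "\<dots> = 2 powr r * (a powr (r - s) * b powr (-r))"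
    using ab by (simp add: powr_mult powr_diff powr_minus field_simps)
  also have "\<dots> \<le> 2 powr r * (b powr (r - s) * b powr (-r))"
    using ab r True by (intro mult_left_mono mult_right_mono powr_mono2') auto
  also have "\<dots> \<le> 2 powr r * (a powr (-s) + b powr (-s))"
    using ab by (simp add: powr_add[symmetric])
  finally show ?thesis .
next
  case False
  have "a powr (-s) * b powr (-r) * (a + b) powr r \<le> a powr (-s) * b powr (-r) * (2*b) powr r"
    using ab r False by (intro mult_left_mono powr_mono2) auto
  also have "\<dots> = 2 powr r * a powr (-s)"
    using ab by (simp add: powr_mult powr_minus field_simps)
  also have "\<dots> \<le> 2 powr r * (a powr (-s) + b powr (-s))"
    by simp
  finally show ?thesis .
qed

lemma summable_xi: "\<alpha> > 0 \<Longrightarrow> summable (\<lambda>n. real (Suc n) powr (-(1 + \<alpha>)))"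
  using summable_Suc_iff[where f="\<lambda>n. real n powr (-(1 + \<alpha>))"] summable_real_powr_iff by simp

lemma sum_le_xi: "\<alpha> > 0 \<Longrightarrow> (\<Sum>n<t. real (Suc n) powr (-(1 + \<alpha>))) \<le> xi \<alpha>"
  unfolding xi_def by (rule sum_le_suminf[OF summable_xi]) auto

lemma xi_ge_one: "\<alpha> > 0 \<Longrightarrow> 1 \<le> xi \<alpha>"
  using sum_le_xi[of \<alpha> 1] by simp

lemma convolution_powr_le:
  fixes \<alpha> r :: real
  assumes \<alpha>: "\<alpha> > 0" and r: "0 < r" "r \<le> 1 + \<alpha>" "r \<le> 2"
  shows "(\<Sum>u<t. real (t - u) powr (-(1+\<alpha>)) * real (u+1) powr (-r)) \<le> 8 * xi \<alpha> * real (t+1) powr (-r)"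
proof -
  let ?s = "1 + \<alpha>" and ?f = "\<lambda>n. real (Suc n) powr (-(1 + \<alpha>))"
  have reflect: "(\<Sum>u<t. real (t - u) powr (-?s)) = (\<Sum>u<t. ?f u)"
  proof -
    have "(\<Sum>u<t. real (t - u) powr (-?s)) = (\<Sum>u<t. ?f (t - Suc u))"
      by (rule sum.cong) (auto simp: Suc_diff_Suc)
    also have "\<dots> = (\<Sum>u<t. ?f u)"
      by (rule sum.nat_diff_reindex)
    finally show ?thesis .
  qed
  have "(\<Sum>u<t. real (t - u) powr (-?s) * real (u+1) powr (-r) * real (t+1) powr r)
      \<le> (\<Sum>u<t. 2 powr r * (real (t - u) powr (-?s) + real (u+1) powr (-?s)))"
  proof (rule sum_mono)
    fix u assume "u \<in> {..<t}"
    then have "real (t+1) = real (t - u) + real (u+1)" by auto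
    then show "real (t - u) powr (-?s) * real (u+1) powr (-r) * real (t+1) powr r
        \<le> 2 powr r * (real (t - u) powr (-?s) + real (u+1) powr (-?s))"
      using \<open>u \<in> {..<t}\<close> r by (simp only:) (intro powr_mult_powr_le_sum, auto)
  qed
  also have "\<dots> = 2 powr r * ((\<Sum>u<t. real (t - u) powr (-?s)) + (\<Sum>u<t. ?f u))"
    by (simp add: sum.distrib sum_distrib_left distrib_left)
  also have "\<dots> = 2 powr r * (2 * (\<Sum>u<t. ?f u))"
    by (simp only: reflect) simp
  also have "\<dots> \<le> 4 * (2 * xi \<alpha>)"
  proof (rule mult_mono)
    show "2 powr r \<le> 4"
      using powr_mono[of r 2 2] r by simp
  qed (use sum_le_xi[OF \<alpha>] in \<open>auto intro: sum_nonneg\<close>)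
  finally have "(\<Sum>u<t. real (t - u) powr (-?s) * real (u+1) powr (-r)) * real (t+1) powr r \<le> 8 * xi \<alpha>"
    by (simp add: sum_distrib_right)
  then have "(\<Sum>u<t. real (t - u) powr (-?s) * real (u+1) powr (-r)) * real (t+1) powr r * real (t+1) powr (-r)
      \<le> 8 * xi \<alpha> * real (t+1) powr (-r)"
    by (rule mult_right_mono) simp
  then show ?thesis
    by (simp add: mult.assoc powr_add[symmetric])
qed

lemma powr_rescale_le:
  fixes g l m a s y A :: real
  assumes g: "g > 0" and l: "l > 0" and m: "m > 0"
    and le: "(g * l) powr (1 + a) * y * m powr s \<le> A"
  shows "l * y \<le> g powr (-(1+a)) * A * m powr (-s) * l powr (-a)"
proof -
  have "g powr (-(1+a)) * ((g * l) powr (1 + a) * y * m powr s) * m powr (-s) * l powr (-a)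
      = (g powr (-(1+a)) * g powr (1+a)) * (l powr (1+a) * l powr (-a)) * (m powr s * m powr (-s)) * y"
    using g l by (simp add: powr_mult ac_simps)
  also have "\<dots> = l * y"
    using g l m by (simp add: powr_add[symmetric])
  finally have "l * y = g powr (-(1+a)) * ((g * l) powr (1 + a) * y * m powr s) * m powr (-s) * l powr (-a)" ..
  also have "\<dots> \<le> g powr (-(1+a)) * A * m powr (-s) * l powr (-a)"
    using le by (intro mult_right_mono mult_left_mono) auto
  finally show ?thesis .
qed

lemma volterra_comparison:
  fixes a :: "nat \<Rightarrow> ennreal" and F b :: "nat \<Rightarrow> real" and K :: "nat \<Rightarrow> nat \<Rightarrow> real"
  assumes rec: "\<And>t. a t \<le> ennreal (F t) + (\<Sum>u<t. ennreal (K t u) * a u)"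
    and F: "\<And>t. 0 \<le> F t" and K: "\<And>t u. 0 \<le> K t u" and b: "\<And>t. 0 \<le> b t"
    and super: "\<And>t. F t + (\<Sum>u<t. K t u * b u) \<le> b t"
  shows "a t \<le> ennreal (b t)"
proof (induction t rule: less_induct)
  case (less t)
  have "a t \<le> ennreal (F t) + (\<Sum>u<t. ennreal (K t u) * a u)"
    by (rule rec)
  also have "\<dots> \<le> ennreal (F t) + (\<Sum>u<t. ennreal (K t u) * ennreal (b u))"
    using less by (intro add_left_mono sum_mono mult_left_mono) auto
  also have "\<dots> = ennreal (F t) + ennreal (\<Sum>u<t. K t u * b u)"
    using K b by (simp add: ennreal_mult[symmetric])
  also have "\<dots> = ennreal (F t + (\<Sum>u<t. K t u * b u))"
    using F K b by (simp add: sum_nonneg)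
  also have "\<dots> \<le> ennreal (b t)"
    using super by (rule ennreal_leI)
  finally show ?case .
qed

section \<open>SGD on a product of samples\<close>

lemma measurable_sgd:
  fixes M :: "('a::{real_inner,second_countable_topology} \<times> real) measure"
  assumes M: "sets M = sets borel" and J: "{..<t} \<subseteq> J"
  shows "(\<lambda>\<omega>. sgd \<gamma> \<omega> t) \<in> borel_measurable (PiM J (\<lambda>_. M))"
  using J
proof (induction t)
  case (Suc t)
  have "(\<lambda>\<omega>. \<omega> t) \<in> PiM J (\<lambda>_. M) \<rightarrow>\<^sub>M borel"
    using Suc.prems measurable_cong_sets[OF refl M] by (auto intro: measurable_component_singleton)
  moreover have "fst \<in> borel_measurable borel" "snd \<in> borel_measurable borel"
    by (intro borel_measurable_continuous_onI continuous_intros)+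
  ultimately have [measurable]:
      "(\<lambda>\<omega>. fst (\<omega> t)) \<in> borel_measurable (PiM J (\<lambda>_. M))"
      "(\<lambda>\<omega>. snd (\<omega> t)) \<in> borel_measurable (PiM J (\<lambda>_. M))"
    by (auto intro: measurable_compose)
  have "{..<t} \<subseteq> J"
    using Suc.prems by auto
  note [measurable] = Suc.IH[OF this]
  show ?case by simp
qed simp

lemma sgd_cong: "(\<And>s. s < t \<Longrightarrow> \<omega> s = \<omega>' s) \<Longrightarrow> sgd \<gamma> \<omega> t = sgd \<gamma> \<omega>' t"
  by (induction t) auto

lemma nn_integral_sgd_Suc:
  fixes M :: "('a::{real_inner,second_countable_topology} \<times> real) measure"
  assumes M: "prob_space M" "sets M = sets borel"
    and F[measurable]: "F \<in> borel_measurable borel"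
  shows "(\<integral>\<^sup>+\<omega>. F (sgd \<gamma> \<omega> (Suc t)) \<partial>PiM {..<Suc t} (\<lambda>_. M))
       = (\<integral>\<^sup>+\<omega>. (\<integral>\<^sup>+z. F (sgd \<gamma> \<omega> t - (\<gamma> * (sgd \<gamma> \<omega> t \<bullet> fst z - snd z)) *\<^sub>R fst z) \<partial>M)
            \<partial>PiM {..<t} (\<lambda>_. M))"
proof -
  interpret product_sigma_finite "\<lambda>_. M"
    using M by (simp add: product_sigma_finite_def prob_space_imp_sigma_finite)
  have "(\<lambda>\<omega>. sgd \<gamma> \<omega> (Suc t)) \<in> borel_measurable (PiM (insert t {..<t}) (\<lambda>_. M))"
    by (rule measurable_sgd[OF M(2)]) auto
  then have "(\<lambda>\<omega>. F (sgd \<gamma> \<omega> (Suc t))) \<in> borel_measurable (PiM (insert t {..<t}) (\<lambda>_. M))"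
    by measurable
  then have "(\<integral>\<^sup>+\<omega>. F (sgd \<gamma> \<omega> (Suc t)) \<partial>PiM (insert t {..<t}) (\<lambda>_. M))
      = (\<integral>\<^sup>+w. (\<integral>\<^sup>+z. F (sgd \<gamma> (w(t := z)) (Suc t)) \<partial>M) \<partial>PiM {..<t} (\<lambda>_. M))"
    by (intro product_nn_integral_insert) auto
  moreover have "sgd \<gamma> (w(t := z)) t = sgd \<gamma> w t" for w :: "nat \<Rightarrow> 'a \<times> real" and z
    by (rule sgd_cong) auto
  ultimately show ?thesis
    by (simp add: lessThan_Suc)
qed

lemma nn_integral_PiM_restrict_lessThan:
  assumes M: "prob_space M" and f[measurable]: "f \<in> borel_measurable (PiM {..<T} (\<lambda>_. M))"
  shows "(\<integral>\<^sup>+\<omega>. f (restrict \<omega> {..<T}) \<partial>PiM UNIV (\<lambda>_::nat. M)) = (\<integral>\<^sup>+\<omega>. f \<omega> \<partial>PiM {..<T} (\<lambda>_. M))"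
proof -
  interpret product_prob_space "\<lambda>_::nat. M" UNIV
    using M by (simp add: product_prob_space_def product_prob_space_axioms_def
        product_sigma_finite_def prob_space_imp_sigma_finite)
  have "(\<lambda>\<omega>. restrict \<omega> {..<T}) \<in> PiM UNIV (\<lambda>_. M) \<rightarrow>\<^sub>M PiM {..<T} (\<lambda>_. M)"
    by (rule measurable_restrict_subset) simp
  then have "(\<integral>\<^sup>+\<omega>. f (restrict \<omega> {..<T}) \<partial>PiM UNIV (\<lambda>_. M))
      = (\<integral>\<^sup>+\<omega>. f \<omega> \<partial>distr (PiM UNIV (\<lambda>_. M)) (PiM {..<T} (\<lambda>_. M)) (\<lambda>\<omega>. restrict \<omega> {..<T}))"
    by (simp add: nn_integral_distr)
  also have "\<dots> = (\<integral>\<^sup>+\<omega>. f \<omega> \<partial>PiM {..<T} (\<lambda>_. M))"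
    by (subst distr_PiM_restrict_finite) auto
  finally show ?thesis .
qed


section \<open>Covariance operator and its eigenbasis\<close>

locale covariance_eigenbasis =
  fixes \<rho> :: "('a::{real_inner,banach,second_countable_topology} \<times> real) measure"
    and I :: "'i set" and lam :: "'i \<Rightarrow> real" and v :: "'i \<Rightarrow> 'a"
  assumes prob: "prob_space \<rho>"
    and sets_rho: "sets \<rho> = sets (borel :: ('a \<times> real) measure)"
    and second_moment: "integrable \<rho> (\<lambda>z. (norm (fst z))\<^sup>2)"
    and I_countable: "countable I"
    and v_orthonormal: "\<forall>i\<in>I. \<forall>j\<in>I. v i \<bullet> v j = (if i = j then 1 else 0)"
    and v_complete: "\<forall>x. ((\<lambda>i. (x \<bullet> v i) *\<^sub>R v i) has_sum x) I"
    and eigen: "\<forall>i\<in>I. cov_op \<rho> (v i) = lam i *\<^sub>R v i"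
    and lam_pos: "\<forall>i\<in>I. lam i > 0"
begin

lemma measurable_fst_sample[measurable]: "fst \<in> borel_measurable \<rho>"
  and measurable_snd_sample[measurable]: "snd \<in> borel_measurable \<rho>"
  unfolding measurable_cong_sets[OF sets_rho refl]
  by (intro borel_measurable_continuous_onI continuous_intros)+

lemma integrable_inner_mult_inner: "integrable \<rho> (\<lambda>z. (u \<bullet> fst z) * (w \<bullet> fst z))"
proof (rule Bochner_Integration.integrable_bound)
  show "integrable \<rho> (\<lambda>z. norm u * norm w * (norm (fst z))\<^sup>2)"
    using second_moment by (rule integrable_mult_right)
  have "norm ((u \<bullet> x) * (w \<bullet> x)) \<le> norm (norm u * norm w * (norm x)\<^sup>2)" for x :: 'a
    using mult_mono[OF Cauchy_Schwarz_ineq2[of u x] Cauchy_Schwarz_ineq2[of w x]]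
    by (simp add: abs_mult power2_eq_square ac_simps)
  then show "AE z in \<rho>. norm ((u \<bullet> fst z) * (w \<bullet> fst z)) \<le> norm (norm u * norm w * (norm (fst z))\<^sup>2)"
    by simp
qed measurable

lemma integrable_inner_scaleR: "integrable \<rho> (\<lambda>z. (u \<bullet> fst z) *\<^sub>R fst z)"
proof (rule Bochner_Integration.integrable_bound)
  show "integrable \<rho> (\<lambda>z. norm u * (norm (fst z))\<^sup>2)"
    using second_moment by (rule integrable_mult_right)
  have "norm ((u \<bullet> x) *\<^sub>R x) \<le> norm (norm u * (norm x)\<^sup>2)" for x :: 'a
    using mult_right_mono[OF Cauchy_Schwarz_ineq2[of u x], of "norm x"]
    by (simp add: power2_eq_square ac_simps)
  then show "AE z in \<rho>. norm ((u \<bullet> fst z) *\<^sub>R fst z) \<le> norm (norm u * (norm (fst z))\<^sup>2)"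
    by simp
qed measurable

lemma inner_cov_op: "w \<bullet> cov_op \<rho> u = (\<integral>z. (u \<bullet> fst z) * (w \<bullet> fst z) \<partial>\<rho>)"
  unfolding cov_op_def
  by (subst integral_inner_right[symmetric]) (simp_all add: integrable_inner_scaleR ac_simps)

lemma bounded_linear_cov_op: "bounded_linear (cov_op \<rho>)"
proof (rule bounded_linear_intro)
  show "cov_op \<rho> (a + b) = cov_op \<rho> a + cov_op \<rho> b" for a b
    unfolding cov_op_def
    by (simp add: inner_add_left scaleR_add_left integrable_inner_scaleR)
  show "cov_op \<rho> (c *\<^sub>R a) = c *\<^sub>R cov_op \<rho> a" for c a
    unfolding cov_op_def
    by (subst integral_scaleR_right[symmetric]) (auto intro!: Bochner_Integration.integral_cong)
  show "norm (cov_op \<rho> u) \<le> norm u * (\<integral>z. (norm (fst z))\<^sup>2 \<partial>\<rho>)" for u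
  proof -
    have "norm (cov_op \<rho> u) \<le> (\<integral>z. norm ((u \<bullet> fst z) *\<^sub>R fst z) \<partial>\<rho>)"
      unfolding cov_op_def by (rule integral_norm_bound)
    also have "\<dots> \<le> (\<integral>z. norm u * (norm (fst z))\<^sup>2 \<partial>\<rho>)"
    proof (rule integral_mono)
      show "norm ((u \<bullet> fst z) *\<^sub>R fst z) \<le> norm u * (norm (fst z))\<^sup>2" for z :: "'a \<times> real"
        using mult_right_mono[OF Cauchy_Schwarz_ineq2[of u "fst z"], of "norm (fst z)"]
        by (simp add: power2_eq_square ac_simps)
    qed (use integrable_norm[OF integrable_inner_scaleR] second_moment in auto)
    finally show ?thesis
      by simp
  qed
qed

lemma has_sum_expected_sq:
  "((\<lambda>i. lam i * (u \<bullet> v i)\<^sup>2) has_sum (\<integral>z. (u \<bullet> fst z)\<^sup>2 \<partial>\<rho>)) I"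
proof -
  have "((\<lambda>i. u \<bullet> cov_op \<rho> ((u \<bullet> v i) *\<^sub>R v i)) has_sum u \<bullet> cov_op \<rho> u) I"
    using v_complete
    by (intro has_sum_bounded_linear[OF bounded_linear_inner_right]
          has_sum_bounded_linear[OF bounded_linear_cov_op]) auto
  moreover have "u \<bullet> cov_op \<rho> ((u \<bullet> v i) *\<^sub>R v i) = lam i * (u \<bullet> v i)\<^sup>2" if "i \<in> I" for i
    using that eigen linear_cmul[OF bounded_linear.linear[OF bounded_linear_cov_op]]
    by (simp add: power2_eq_square)
  moreover have "u \<bullet> cov_op \<rho> u = (\<integral>z. (u \<bullet> fst z)\<^sup>2 \<partial>\<rho>)"
    by (simp add: inner_cov_op power2_eq_square)
  ultimately show ?thesis
    by (metis (no_types, lifting) has_sum_cong)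
qed

lemma expected_sq_eigvec: "i \<in> I \<Longrightarrow> (\<integral>z. (v i \<bullet> fst z)\<^sup>2 \<partial>\<rho>) = lam i"
  using inner_cov_op[of "v i" "v i"] eigen v_orthonormal by (simp add: power2_eq_square)

definition qform :: "('i \<Rightarrow> real) \<Rightarrow> 'a \<Rightarrow> ennreal" where
  "qform w \<eta> = (\<Sum>\<^sub>\<infinity>i\<in>I. ennreal (w i * (\<eta> \<bullet> v i)\<^sup>2))"

lemma borel_measurable_qform[measurable]: "qform w \<in> borel_measurable borel"
  unfolding qform_def using I_countable by measurable

lemma qform_lam: "qform lam u = (\<integral>\<^sup>+z. ennreal ((u \<bullet> fst z)\<^sup>2) \<partial>\<rho>)"
proof -
  have "qform lam u = ennreal (\<Sum>\<^sub>\<infinity>i\<in>I. lam i * (u \<bullet> v i)\<^sup>2)"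
    unfolding qform_def using has_sum_expected_sq[of u] lam_pos
    by (intro ennreal_infsum[symmetric]) (auto simp: summable_on_def less_imp_le)
  also have "\<dots> = ennreal (\<integral>z. (u \<bullet> fst z)\<^sup>2 \<partial>\<rho>)"
    by (simp only: infsumI[OF has_sum_expected_sq])
  also have "\<dots> = (\<integral>\<^sup>+z. ennreal ((u \<bullet> fst z)\<^sup>2) \<partial>\<rho>)"
    using integrable_inner_mult_inner[of u u] by (simp add: nn_integral_eq_integral power2_eq_square)
  finally show ?thesis .
qed

lemma nn_integral_sq_eigvec: "i \<in> I \<Longrightarrow> (\<integral>\<^sup>+z. ennreal ((v i \<bullet> fst z)\<^sup>2) \<partial>\<rho>) = ennreal (lam i)"
  using integrable_inner_mult_inner[of "v i" "v i"] expected_sq_eigvec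
  by (simp add: nn_integral_eq_integral power2_eq_square)

(* The cross term is integrated exactly, via E[<v_i,X> <eta,X>] = lambda_i <eta,v_i>; the fourth
   moment term is kept as a nonnegative integral, which need not be finite. *)
lemma expected_coordinate_step:
  assumes i: "i \<in> I" and c: "0 \<le> c"
  shows "(\<integral>\<^sup>+z. ennreal (c * ((\<eta> - (\<gamma> * (\<eta> \<bullet> fst z)) *\<^sub>R fst z) \<bullet> v i)\<^sup>2) \<partial>\<rho>)
     \<le> ennreal (c * (1 - 2*\<gamma>*lam i) * (\<eta> \<bullet> v i)\<^sup>2)
       + (\<integral>\<^sup>+z. ennreal (\<gamma>\<^sup>2 * c * ((\<eta> \<bullet> fst z)\<^sup>2 * (fst z \<bullet> v i)\<^sup>2)) \<partial>\<rho>)"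
proof -
  define g where "g z = c * (\<eta> \<bullet> v i)\<^sup>2 - (2*c*\<gamma>*(\<eta> \<bullet> v i)) * ((v i \<bullet> fst z) * (\<eta> \<bullet> fst z))"
    for z :: "'a \<times> real"
  define h where "h z = \<gamma>\<^sup>2 * c * ((\<eta> \<bullet> fst z)\<^sup>2 * (fst z \<bullet> v i)\<^sup>2)" for z :: "'a \<times> real"
  have split: "c * ((\<eta> - (\<gamma> * (\<eta> \<bullet> fst z)) *\<^sub>R fst z) \<bullet> v i)\<^sup>2 = g z + h z" for z
    by (simp add: g_def h_def algebra_simps power2_eq_square inner_commute)
  have const: "integrable \<rho> (\<lambda>z. a)" for a :: real
    using prob_space.finite_measure[OF prob] by (rule finite_measure.integrable_const)
  have g_int: "integrable \<rho> g"
    unfolding g_def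
    by (intro Bochner_Integration.integrable_diff const integrable_mult_right integrable_inner_mult_inner)
  have "(\<integral>z. g z \<partial>\<rho>) = c * (\<eta> \<bullet> v i)\<^sup>2 - (2*c*\<gamma>*(\<eta> \<bullet> v i)) * (\<integral>z. (v i \<bullet> fst z) * (\<eta> \<bullet> fst z) \<partial>\<rho>)"
    unfolding g_def
    by (subst Bochner_Integration.integral_diff)
      (simp_all add: const integrable_inner_mult_inner prob_space.prob_space[OF prob])
  also have "\<dots> = c * (1 - 2*\<gamma>*lam i) * (\<eta> \<bullet> v i)\<^sup>2"
    using inner_cov_op[of \<eta> "v i"] eigen i by (simp add: algebra_simps power2_eq_square)
  finally have "(\<integral>z. g z \<partial>\<rho>) = c * (1 - 2*\<gamma>*lam i) * (\<eta> \<bullet> v i)\<^sup>2" .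
  moreover have "(\<integral>\<^sup>+z. ennreal (g z + h z) \<partial>\<rho>) \<le> ennreal (\<integral>z. g z \<partial>\<rho>) + (\<integral>\<^sup>+z. ennreal (h z) \<partial>\<rho>)"
  proof (rule nn_integral_add_integrable_le[OF g_int])
    show "h \<in> borel_measurable \<rho>"
      unfolding h_def by measurable
    show "0 \<le> h z" for z
      using c by (simp add: h_def)
    show "0 \<le> g z + h z" for z
      using c by (simp add: split[symmetric])
  qed
  ultimately show ?thesis
    by (simp add: split h_def)
qed

end

section \<open>The SGD error recursion\<close>

locale sgd_setting = covariance_eigenbasis \<rho> I lam v
  for \<rho> :: "('a::{real_inner,banach,second_countable_topology} \<times> real) measure"
    and I :: "'i set" and lam :: "'i \<Rightarrow> real" and v :: "'i \<Rightarrow> 'a" +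
  fixes \<theta>s :: 'a and \<alpha> R\<^sub>\<alpha> \<gamma> :: real
  assumes noiseless: "AE z in \<rho>. \<theta>s \<bullet> fst z = snd z"
    and alpha: "0 < \<alpha>" "\<alpha> < 1"
    and R_pos: "R\<^sub>\<alpha> > 0"
    and capacity: "capacity_cond \<rho> I lam v \<alpha> R\<^sub>\<alpha>"
    and gamma_pos: "\<gamma> > 0"
    and gamma_le: "\<gamma> powr (1 - \<alpha>) \<le> 1 / (32 * xi \<alpha> * R\<^sub>\<alpha>)"
begin

lemma capacity_qform:
  "(\<integral>\<^sup>+z. qform (\<lambda>i. lam i powr (-\<alpha>)) (fst z) * ennreal ((u \<bullet> fst z)\<^sup>2) \<partial>\<rho>) \<le> ennreal R\<^sub>\<alpha> * qform lam u"
  using capacity by (simp add: capacity_cond_def neg_pow_qf_def qform_def[symmetric] qform_lam)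

(* The capacity condition tested on u = v_i, together with E <v_i,X>^4 >= (E <v_i,X>^2)^2 = lambda_i^2. *)
lemma lam_powr_le_R:
  assumes i: "i \<in> I"
  shows "lam i powr (1 - \<alpha>) \<le> R\<^sub>\<alpha>"
proof -
  let ?X = "\<lambda>z. ennreal ((v i \<bullet> fst z)\<^sup>2)"
  have li: "lam i > 0"
    using i lam_pos by auto
  have "ennreal (lam i) ^ 2 = (\<integral>\<^sup>+z. ?X z * 1 \<partial>\<rho>) ^ 2"
    using nn_integral_sq_eigvec[OF i] by simp
  also have "\<dots> \<le> (\<integral>\<^sup>+z. ?X z ^ 2 \<partial>\<rho>) * (\<integral>\<^sup>+z. 1 ^ 2 \<partial>\<rho>)"
    by (rule Cauchy_Schwarz_nn_integral) measurable
  finally have fourth: "ennreal (lam i) ^ 2 \<le> (\<integral>\<^sup>+z. ?X z ^ 2 \<partial>\<rho>)"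
    by (simp add: prob_space.emeasure_space_1[OF prob])
  have "ennreal (lam i powr (-\<alpha>) * (lam i)\<^sup>2) = ennreal (lam i powr (-\<alpha>)) * ennreal (lam i) ^ 2"
    using li by (simp add: ennreal_mult ennreal_power)
  also have "\<dots> \<le> ennreal (lam i powr (-\<alpha>)) * (\<integral>\<^sup>+z. ?X z ^ 2 \<partial>\<rho>)"
    using fourth by (rule mult_left_mono) simp
  also have "\<dots> = (\<integral>\<^sup>+z. ennreal (lam i powr (-\<alpha>) * (fst z \<bullet> v i)\<^sup>2) * ?X z \<partial>\<rho>)"
    by (subst nn_integral_cmult[symmetric])
      (auto intro!: nn_integral_cong simp: ennreal_mult[symmetric] power2_eq_square inner_commute)
  also have "\<dots> \<le> (\<integral>\<^sup>+z. qform (\<lambda>i. lam i powr (-\<alpha>)) (fst z) * ?X z \<partial>\<rho>)"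
    unfolding qform_def using i
    by (intro nn_integral_mono mult_right_mono member_le_infsum_ennreal) auto
  also have "\<dots> \<le> ennreal R\<^sub>\<alpha> * qform lam (v i)"
    by (rule capacity_qform)
  also have "\<dots> = ennreal (R\<^sub>\<alpha> * lam i)"
    using nn_integral_sq_eigvec[OF i] R_pos li by (simp add: qform_lam ennreal_mult)
  finally have "lam i powr (-\<alpha>) * (lam i)\<^sup>2 \<le> R\<^sub>\<alpha> * lam i"
    using R_pos li by simp
  moreover have "lam i powr (-\<alpha>) * (lam i)\<^sup>2 = lam i powr (1 - \<alpha>) * lam i"
    using li by (simp add: powr_diff powr_minus power2_eq_square field_simps)
  ultimately show ?thesis
    using li by simp
qed

lemma gamma_lam_le:
  assumes i: "i \<in> I"
  shows "\<gamma> * lam i \<le> 1/32"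
proof -
  have li: "lam i > 0"
    using i lam_pos by auto
  have "(\<gamma> * lam i) powr (1 - \<alpha>) = \<gamma> powr (1 - \<alpha>) * lam i powr (1 - \<alpha>)"
    using gamma_pos li by (simp add: powr_mult)
  also have "\<dots> \<le> 1 / (32 * xi \<alpha> * R\<^sub>\<alpha>) * R\<^sub>\<alpha>"
    using gamma_le lam_powr_le_R[OF i] xi_ge_one[OF alpha(1)] R_pos by (intro mult_mono) auto
  also have "\<dots> \<le> 1/32"
    using xi_ge_one[OF alpha(1)] R_pos by (simp add: field_simps)
  finally have small: "(\<gamma> * lam i) powr (1 - \<alpha>) \<le> 1/32" .
  then have "\<gamma> * lam i < 1"
    using ge_one_powr_ge_zero[of "\<gamma> * lam i" "1 - \<alpha>"] alpha by fastforce
  then have "\<gamma> * lam i \<le> (\<gamma> * lam i) powr (1 - \<alpha>)"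
    using powr_mono'[of "1 - \<alpha>" 1 "\<gamma> * lam i"] gamma_pos li alpha by simp
  with small show ?thesis
    by simp
qed

lemma weighted_fourth_moment_le:
  assumes w: "\<And>i. i \<in> I \<Longrightarrow> w i \<le> K * lam i powr (-\<alpha>)" and K: "0 \<le> K"
  shows "(\<Sum>\<^sub>\<infinity>i\<in>I. \<integral>\<^sup>+z. ennreal (w i * ((\<eta> \<bullet> fst z)\<^sup>2 * (fst z \<bullet> v i)\<^sup>2)) \<partial>\<rho>)
    \<le> ennreal (K * R\<^sub>\<alpha>) * qform lam \<eta>"
proof -
  let ?X = "\<lambda>i z. ennreal (w i * ((\<eta> \<bullet> fst z)\<^sup>2 * (fst z \<bullet> v i)\<^sup>2))"
  have "(\<Sum>\<^sub>\<infinity>i\<in>I. ?X i z)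
      \<le> ennreal K * (qform (\<lambda>i. lam i powr (-\<alpha>)) (fst z) * ennreal ((\<eta> \<bullet> fst z)\<^sup>2))"
    for z :: "'a \<times> real"
  proof -
    have "(\<Sum>\<^sub>\<infinity>i\<in>I. ?X i z)
        \<le> (\<Sum>\<^sub>\<infinity>i\<in>I. ennreal (K * (\<eta> \<bullet> fst z)\<^sup>2) * ennreal (lam i powr (-\<alpha>) * (fst z \<bullet> v i)\<^sup>2))"
    proof (rule infsum_mono)
      fix i assume "i \<in> I"
      then have "w i * ((\<eta> \<bullet> fst z)\<^sup>2 * (fst z \<bullet> v i)\<^sup>2)
          \<le> (K * (\<eta> \<bullet> fst z)\<^sup>2) * (lam i powr (-\<alpha>) * (fst z \<bullet> v i)\<^sup>2)"
        using mult_right_mono[OF w, of i "(\<eta> \<bullet> fst z)\<^sup>2 * (fst z \<bullet> v i)\<^sup>2"] by (simp add: ac_simps)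
      then show "?X i z \<le> ennreal (K * (\<eta> \<bullet> fst z)\<^sup>2) * ennreal (lam i powr (-\<alpha>) * (fst z \<bullet> v i)\<^sup>2)"
        using K by (simp add: ennreal_mult[symmetric] ennreal_leI)
    qed (simp_all add: nonneg_summable_on_complete)
    also have "\<dots> = ennreal (K * (\<eta> \<bullet> fst z)\<^sup>2) * qform (\<lambda>i. lam i powr (-\<alpha>)) (fst z)"
      unfolding qform_def using I_countable by (rule infsum_ennreal_cmult)
    also have "\<dots> = ennreal K * (qform (\<lambda>i. lam i powr (-\<alpha>)) (fst z) * ennreal ((\<eta> \<bullet> fst z)\<^sup>2))"
      using K by (simp add: ennreal_mult ac_simps)
    finally show ?thesis .
  qed
  then have "(\<integral>\<^sup>+z. (\<Sum>\<^sub>\<infinity>i\<in>I. ?X i z) \<partial>\<rho>)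
      \<le> (\<integral>\<^sup>+z. ennreal K * (qform (\<lambda>i. lam i powr (-\<alpha>)) (fst z) * ennreal ((\<eta> \<bullet> fst z)\<^sup>2)) \<partial>\<rho>)"
    by (intro nn_integral_mono)
  also have "\<dots> \<le> ennreal K * (ennreal R\<^sub>\<alpha> * qform lam \<eta>)"
    by (subst nn_integral_cmult) (auto intro: mult_left_mono capacity_qform)
  finally show ?thesis
    using I_countable K R_pos
    by (simp add: nn_integral_infsum_ennreal[symmetric] ennreal_mult mult.assoc)
qed

lemma expected_qform_step:
  assumes w: "\<And>i. i \<in> I \<Longrightarrow> 0 \<le> w i" "\<And>i. i \<in> I \<Longrightarrow> w i \<le> K * lam i powr (-\<alpha>)"
    and K: "0 \<le> K"
  shows "(\<integral>\<^sup>+z. qform w (\<eta> - (\<gamma> * (\<eta> \<bullet> fst z)) *\<^sub>R fst z) \<partial>\<rho>)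
     \<le> qform (\<lambda>i. w i * (1 - 2*\<gamma>*lam i)) \<eta> + ennreal (\<gamma>\<^sup>2 * K * R\<^sub>\<alpha>) * qform lam \<eta>"
proof -
  let ?noise = "\<lambda>i. \<integral>\<^sup>+z. ennreal (\<gamma>\<^sup>2 * w i * ((\<eta> \<bullet> fst z)\<^sup>2 * (fst z \<bullet> v i)\<^sup>2)) \<partial>\<rho>"
  have "(\<integral>\<^sup>+z. qform w (\<eta> - (\<gamma> * (\<eta> \<bullet> fst z)) *\<^sub>R fst z) \<partial>\<rho>)
      = (\<Sum>\<^sub>\<infinity>i\<in>I. \<integral>\<^sup>+z. ennreal (w i * ((\<eta> - (\<gamma> * (\<eta> \<bullet> fst z)) *\<^sub>R fst z) \<bullet> v i)\<^sup>2) \<partial>\<rho>)"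
    unfolding qform_def using I_countable by (intro nn_integral_infsum_ennreal) measurable
  also have "\<dots> \<le> (\<Sum>\<^sub>\<infinity>i\<in>I. ennreal (w i * (1 - 2*\<gamma>*lam i) * (\<eta> \<bullet> v i)\<^sup>2) + ?noise i)"
    using w(1) by (intro infsum_mono expected_coordinate_step) (simp_all add: nonneg_summable_on_complete)
  also have "\<dots> = qform (\<lambda>i. w i * (1 - 2*\<gamma>*lam i)) \<eta> + (\<Sum>\<^sub>\<infinity>i\<in>I. ?noise i)"
    unfolding qform_def by (simp add: infsum_add nonneg_summable_on_complete)
  also have "\<dots> \<le> qform (\<lambda>i. w i * (1 - 2*\<gamma>*lam i)) \<eta> + ennreal (\<gamma>\<^sup>2 * K * R\<^sub>\<alpha>) * qform lam \<eta>"
  proof (intro add_left_mono weighted_fourth_moment_le)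
    show "\<gamma>\<^sup>2 * w i \<le> \<gamma>\<^sup>2 * K * lam i powr (-\<alpha>)" if "i \<in> I" for i
      using mult_left_mono[OF w(2)[OF that], of "\<gamma>\<^sup>2"] by (simp add: mult.assoc)
  qed (use K in simp)
  finally show ?thesis .
qed

lemma measurable_sgd_sample[measurable]: "(\<lambda>\<omega>. sgd \<gamma> \<omega> t) \<in> borel_measurable (PiM {..<t} (\<lambda>_. \<rho>))"
  by (rule measurable_sgd[OF sets_rho]) simp

(* theta_t depends only on the samples 0, ..., t-1, so its moments live on PiM {..<t}. *)
definition mean_qform :: "nat \<Rightarrow> ('i \<Rightarrow> real) \<Rightarrow> ennreal" where
  "mean_qform t w = (\<integral>\<^sup>+\<omega>. qform w (sgd \<gamma> \<omega> t - \<theta>s) \<partial>PiM {..<t} (\<lambda>_. \<rho>))"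

lemma mean_qform_0: "mean_qform 0 w = qform w (- \<theta>s)"
proof -
  have "emeasure (PiM ({} :: nat set) (\<lambda>_. \<rho>)) (space (PiM {} (\<lambda>_. \<rho>))) = 1"
    by (intro prob_space.emeasure_space_1 prob_space_PiM) simp
  then show ?thesis
    by (simp add: mean_qform_def)
qed

lemma mean_qform_Suc_le:
  assumes w: "\<And>i. i \<in> I \<Longrightarrow> 0 \<le> w i" "\<And>i. i \<in> I \<Longrightarrow> w i \<le> K * lam i powr (-\<alpha>)"
    and K: "0 \<le> K"
  shows "mean_qform (Suc t) w
    \<le> mean_qform t (\<lambda>i. w i * (1 - 2*\<gamma>*lam i)) + ennreal (\<gamma>\<^sup>2 * K * R\<^sub>\<alpha>) * mean_qform t lam"
proof -
  have "mean_qform (Suc t) w = (\<integral>\<^sup>+\<omega>. (\<integral>\<^sup>+z. qform w (sgd \<gamma> \<omega> t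
      - (\<gamma> * (sgd \<gamma> \<omega> t \<bullet> fst z - snd z)) *\<^sub>R fst z - \<theta>s) \<partial>\<rho>) \<partial>PiM {..<t} (\<lambda>_. \<rho>))"
    unfolding mean_qform_def using prob sets_rho by (rule nn_integral_sgd_Suc) measurable
  also have "\<dots> \<le> (\<integral>\<^sup>+\<omega>. qform (\<lambda>i. w i * (1 - 2*\<gamma>*lam i)) (sgd \<gamma> \<omega> t - \<theta>s)
      + ennreal (\<gamma>\<^sup>2 * K * R\<^sub>\<alpha>) * qform lam (sgd \<gamma> \<omega> t - \<theta>s) \<partial>PiM {..<t} (\<lambda>_. \<rho>))"
  proof (rule nn_integral_mono)
    fix \<omega> :: "nat \<Rightarrow> 'a \<times> real"
    let ?\<eta> = "sgd \<gamma> \<omega> t - \<theta>s"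
    have eq: "sgd \<gamma> \<omega> t - (\<gamma> * (sgd \<gamma> \<omega> t \<bullet> fst z - snd z)) *\<^sub>R fst z - \<theta>s
        = ?\<eta> - (\<gamma> * (?\<eta> \<bullet> fst z)) *\<^sub>R fst z" if "\<theta>s \<bullet> fst z = snd z" for z :: "'a \<times> real"
      using that by (simp add: algebra_simps)
    have "AE z in \<rho>. qform w (sgd \<gamma> \<omega> t - (\<gamma> * (sgd \<gamma> \<omega> t \<bullet> fst z - snd z)) *\<^sub>R fst z - \<theta>s)
        = qform w (?\<eta> - (\<gamma> * (?\<eta> \<bullet> fst z)) *\<^sub>R fst z)"
      using noiseless by (rule AE_mp) (intro AE_I2 impI arg_cong[where f="qform w"] eq)
    then have "(\<integral>\<^sup>+z. qform w (sgd \<gamma> \<omega> t - (\<gamma> * (sgd \<gamma> \<omega> t \<bullet> fst z - snd z)) *\<^sub>R fst z - \<theta>s) \<partial>\<rho>)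
        = (\<integral>\<^sup>+z. qform w (?\<eta> - (\<gamma> * (?\<eta> \<bullet> fst z)) *\<^sub>R fst z) \<partial>\<rho>)"
      by (rule nn_integral_cong_AE)
    also have "\<dots> \<le> qform (\<lambda>i. w i * (1 - 2*\<gamma>*lam i)) ?\<eta> + ennreal (\<gamma>\<^sup>2 * K * R\<^sub>\<alpha>) * qform lam ?\<eta>"
      by (rule expected_qform_step[OF w K])
    finally show "(\<integral>\<^sup>+z. qform w (sgd \<gamma> \<omega> t - (\<gamma> * (sgd \<gamma> \<omega> t \<bullet> fst z - snd z)) *\<^sub>R fst z - \<theta>s) \<partial>\<rho>)
        \<le> qform (\<lambda>i. w i * (1 - 2*\<gamma>*lam i)) ?\<eta> + ennreal (\<gamma>\<^sup>2 * K * R\<^sub>\<alpha>) * qform lam ?\<eta>" .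
  qed
  also have "\<dots> = mean_qform t (\<lambda>i. w i * (1 - 2*\<gamma>*lam i)) + ennreal (\<gamma>\<^sup>2 * K * R\<^sub>\<alpha>) * mean_qform t lam"
    unfolding mean_qform_def by (simp add: nn_integral_add nn_integral_cmult)
  finally show ?thesis .
qed

lemma decay_weight_le:
  assumes i: "i \<in> I"
  shows "lam i * (1 - 2*\<gamma>*lam i)^k \<le> \<gamma> powr (-(1+\<alpha>)) * real (k+1) powr (-(1+\<alpha>)) * lam i powr (-\<alpha>)"
proof -
  have li: "lam i > 0"
    using i lam_pos by auto
  then have "(\<gamma> * lam i) powr (1+\<alpha>) * (1 - 2*\<gamma>*lam i)^k * real (k+1) powr (1+\<alpha>) \<le> 1"
    using powr_mult_one_minus_power_mult_powr_le_one[of "\<gamma> * lam i" "1+\<alpha>" k]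
      gamma_lam_le[OF i] gamma_pos alpha by (simp add: mult.assoc)
  from powr_rescale_le[OF gamma_pos li _ this] show ?thesis
    by simp
qed

lemma mean_qform_unroll:
  "mean_qform n (\<lambda>i. lam i * (1 - 2*\<gamma>*lam i)^k)
     \<le> mean_qform 0 (\<lambda>i. lam i * (1 - 2*\<gamma>*lam i)^(k+n))
       + (\<Sum>u<n. ennreal (\<gamma> powr (1-\<alpha>) * R\<^sub>\<alpha> * real (k + n - u) powr (-(1+\<alpha>))) * mean_qform u lam)"
proof (induction n arbitrary: k)
  case (Suc n)
  let ?c = "\<lambda>j. \<gamma> powr (1-\<alpha>) * R\<^sub>\<alpha> * real j powr (-(1+\<alpha>))"
  have "\<gamma> powr (1-\<alpha>) = \<gamma> powr 2 * \<gamma> powr (-(1+\<alpha>))"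
    by (simp add: powr_add[symmetric])
  also have "\<dots> = \<gamma>\<^sup>2 * \<gamma> powr (-(1+\<alpha>))"
    using gamma_pos by simp
  finally have "\<gamma>\<^sup>2 * (\<gamma> powr (-(1+\<alpha>)) * real (k+1) powr (-(1+\<alpha>))) * R\<^sub>\<alpha> = ?c (k+1)"
    by (simp only: ac_simps)
  note coef = this
  have weight_Suc: "(\<lambda>i. lam i * (1 - 2*\<gamma>*lam i)^k * (1 - 2*\<gamma>*lam i)) = (\<lambda>i. lam i * (1 - 2*\<gamma>*lam i)^Suc k)"
    by (simp only: power_Suc2 mult.assoc)
  have "mean_qform (Suc n) (\<lambda>i. lam i * (1 - 2*\<gamma>*lam i)^k)
      \<le> mean_qform n (\<lambda>i. lam i * (1 - 2*\<gamma>*lam i)^k * (1 - 2*\<gamma>*lam i))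
        + ennreal (\<gamma>\<^sup>2 * (\<gamma> powr (-(1+\<alpha>)) * real (k+1) powr (-(1+\<alpha>))) * R\<^sub>\<alpha>) * mean_qform n lam"
  proof (rule mean_qform_Suc_le)
    show "0 \<le> lam i * (1 - 2*\<gamma>*lam i)^k" if "i \<in> I" for i
      using gamma_lam_le[OF that] lam_pos that by (intro mult_nonneg_nonneg zero_le_power) auto
    show "lam i * (1 - 2*\<gamma>*lam i)^k \<le> \<gamma> powr (-(1+\<alpha>)) * real (k+1) powr (-(1+\<alpha>)) * lam i powr (-\<alpha>)"
      if "i \<in> I" for i
      using that by (rule decay_weight_le)
  qed simp
  also have "\<dots> = mean_qform n (\<lambda>i. lam i * (1 - 2*\<gamma>*lam i)^Suc k) + ennreal (?c (k+1)) * mean_qform n lam"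
    by (simp only: coef weight_Suc)
  also have "\<dots> \<le> mean_qform 0 (\<lambda>i. lam i * (1 - 2*\<gamma>*lam i)^(Suc k + n))
       + (\<Sum>u<n. ennreal (?c (Suc k + n - u)) * mean_qform u lam) + ennreal (?c (k+1)) * mean_qform n lam"
    using Suc.IH[of "Suc k"] by (rule add_right_mono)
  also have "\<dots> = mean_qform 0 (\<lambda>i. lam i * (1 - 2*\<gamma>*lam i)^(k + Suc n))
       + (\<Sum>u<Suc n. ennreal (?c (k + Suc n - u)) * mean_qform u lam)"
    by (simp add: add.assoc)
  finally show ?case .
qed simp

lemma initial_weight_le:
  assumes i: "i \<in> I" and \<beta>: "\<beta> > -1"
  shows "lam i * (1 - 2*\<gamma>*lam i)^t
    \<le> \<gamma> powr (-(1+\<beta>)) * (3 * (1+\<beta>) powr (1+\<beta>)) * real (t+1) powr (-(1 + min \<alpha> \<beta>)) * lam i powr (-\<beta>)"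
proof (rule powr_rescale_le)
  show "lam i > 0"
    using i lam_pos by auto
  then show "(\<gamma> * lam i) powr (1+\<beta>) * (1 - 2*\<gamma>*lam i)^t * real (t+1) powr (1 + min \<alpha> \<beta>)
      \<le> 3 * (1+\<beta>) powr (1+\<beta>)"
    using powr_mult_one_minus_power_mult_powr_le[of "\<gamma> * lam i" "1+\<beta>" "1 + min \<alpha> \<beta>" t]
      gamma_lam_le[OF i] gamma_pos \<beta> alpha by (simp add: mult.assoc)
qed (use gamma_pos in auto)

lemma mean_qform_initial_le:
  assumes \<beta>: "\<beta> > -1" and source: "(\<lambda>i. lam i powr (-\<beta>) * (v i \<bullet> \<theta>s)\<^sup>2) summable_on I"
  shows "mean_qform 0 (\<lambda>i. lam i * (1 - 2*\<gamma>*lam i)^t)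
    \<le> ennreal (source_const I lam v \<beta> \<theta>s
        * (\<gamma> powr (-(1+\<beta>)) * (3 * (1+\<beta>) powr (1+\<beta>)) * real (t+1) powr (-(1 + min \<alpha> \<beta>))))"
proof -
  define M where "M = \<gamma> powr (-(1+\<beta>)) * (3 * (1+\<beta>) powr (1+\<beta>)) * real (t+1) powr (-(1 + min \<alpha> \<beta>))"
  have M: "0 \<le> M"
    by (simp add: M_def)
  have "mean_qform 0 (\<lambda>i. lam i * (1 - 2*\<gamma>*lam i)^t)
      = (\<Sum>\<^sub>\<infinity>i\<in>I. ennreal (lam i * (1 - 2*\<gamma>*lam i)^t * (v i \<bullet> \<theta>s)\<^sup>2))"
    by (simp add: mean_qform_0 qform_def inner_commute)
  also have "\<dots> \<le> (\<Sum>\<^sub>\<infinity>i\<in>I. ennreal M * ennreal (lam i powr (-\<beta>) * (v i \<bullet> \<theta>s)\<^sup>2))"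
  proof (rule infsum_mono)
    fix i assume "i \<in> I"
    then have "lam i * (1 - 2*\<gamma>*lam i)^t * (v i \<bullet> \<theta>s)\<^sup>2 \<le> M * lam i powr (-\<beta>) * (v i \<bullet> \<theta>s)\<^sup>2"
      unfolding M_def by (intro mult_right_mono initial_weight_le \<beta>) auto
    then show "ennreal (lam i * (1 - 2*\<gamma>*lam i)^t * (v i \<bullet> \<theta>s)\<^sup>2)
        \<le> ennreal M * ennreal (lam i powr (-\<beta>) * (v i \<bullet> \<theta>s)\<^sup>2)"
      using M by (simp add: ennreal_mult[symmetric] ennreal_leI mult.assoc)
  qed (simp_all add: nonneg_summable_on_complete)
  also have "\<dots> = ennreal M * ennreal (source_const I lam v \<beta> \<theta>s)"
    unfolding source_const_def using I_countable source
    by (simp add: infsum_ennreal_cmult ennreal_infsum)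
  also have "\<dots> = ennreal (source_const I lam v \<beta> \<theta>s * M)"
    using M by (simp add: ennreal_mult' mult.commute)
  finally show ?thesis
    by (simp add: M_def)
qed

lemma kernel_convolution_le:
  assumes r: "0 < r" "r \<le> 1 + \<alpha>"
  shows "(\<Sum>u<t. \<gamma> powr (1-\<alpha>) * R\<^sub>\<alpha> * real (t - u) powr (-(1+\<alpha>)) * real (u+1) powr (-r))
    \<le> 1/4 * real (t+1) powr (-r)"
proof -
  have "(\<Sum>u<t. \<gamma> powr (1-\<alpha>) * R\<^sub>\<alpha> * real (t - u) powr (-(1+\<alpha>)) * real (u+1) powr (-r))
      = \<gamma> powr (1-\<alpha>) * R\<^sub>\<alpha> * (\<Sum>u<t. real (t - u) powr (-(1+\<alpha>)) * real (u+1) powr (-r))"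
    by (simp add: sum_distrib_left mult.assoc)
  also have "\<dots> \<le> \<gamma> powr (1-\<alpha>) * R\<^sub>\<alpha> * (8 * xi \<alpha> * real (t+1) powr (-r))"
    using R_pos alpha r by (intro mult_left_mono convolution_powr_le) auto
  also have "\<dots> = (\<gamma> powr (1-\<alpha>) * (32 * xi \<alpha> * R\<^sub>\<alpha>)) * (1/4 * real (t+1) powr (-r))"
    by (simp add: field_simps)
  also have "\<dots> \<le> 1/4 * real (t+1) powr (-r)"
    using gamma_le xi_ge_one[OF alpha(1)] R_pos
    by (intro mult_left_le_one_le) (auto simp: field_simps)
  finally show ?thesis .
qed

lemma mean_qform_lam_le:
  assumes \<beta>: "\<beta> > -1" and source: "(\<lambda>i. lam i powr (-\<beta>) * (v i \<bullet> \<theta>s)\<^sup>2) summable_on I"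
  shows "mean_qform t lam
    \<le> ennreal (4 * source_const I lam v \<beta> \<theta>s * ((1+\<beta>) / \<gamma>) powr (1+\<beta>) * real (t+1) powr (-(1 + min \<alpha> \<beta>)))"
proof -
  let ?C = "source_const I lam v \<beta> \<theta>s" and ?p = "1 + \<beta>" and ?r = "1 + min \<alpha> \<beta>"
  define D where "D = 4 * ?C * (?p / \<gamma>) powr ?p"
  define F where "F t = 3/4 * D * real (t+1) powr (-?r)" for t
  define K where "K t u = \<gamma> powr (1-\<alpha>) * R\<^sub>\<alpha> * real (t - u) powr (-(1+\<alpha>))" for t u
  have D: "0 \<le> D"
    using source_const_nonneg[of I lam v \<beta> \<theta>s] by (simp add: D_def)
  have "\<gamma> powr ?p * \<gamma> powr (-?p) = 1"
    using gamma_pos by (simp add: powr_add[symmetric])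
  then have F_eq: "?C * (\<gamma> powr (-?p) * (3 * ?p powr ?p) * real (t+1) powr (-?r)) = F t" for t
    using gamma_pos \<beta> by (simp add: F_def D_def powr_divide field_simps)
  have "mean_qform t lam \<le> ennreal (F t) + (\<Sum>u<t. ennreal (K t u) * mean_qform u lam)" for t
  proof -
    have "mean_qform t lam \<le> mean_qform 0 (\<lambda>i. lam i * (1 - 2*\<gamma>*lam i)^t)
        + (\<Sum>u<t. ennreal (K t u) * mean_qform u lam)"
      using mean_qform_unroll[of t 0] by (simp add: K_def)
    also have "\<dots> \<le> ennreal (F t) + (\<Sum>u<t. ennreal (K t u) * mean_qform u lam)"
      using mean_qform_initial_le[OF \<beta> source, of t] unfolding F_eq by (rule add_right_mono)
    finally show ?thesis .
  qed
  moreover have "F t + (\<Sum>u<t. K t u * (D * real (u+1) powr (-?r))) \<le> D * real (t+1) powr (-?r)" for t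
  proof -
    have "(\<Sum>u<t. K t u * (D * real (u+1) powr (-?r)))
        = D * (\<Sum>u<t. \<gamma> powr (1-\<alpha>) * R\<^sub>\<alpha> * real (t - u) powr (-(1+\<alpha>)) * real (u+1) powr (-?r))"
      by (simp add: K_def sum_distrib_left ac_simps)
    also have "\<dots> \<le> D * (1/4 * real (t+1) powr (-?r))"
      using D alpha \<beta> by (intro mult_left_mono kernel_convolution_le) auto
    finally show ?thesis
      by (simp add: F_def)
  qed
  ultimately have "mean_qform t lam \<le> ennreal (D * real (t+1) powr (-?r))"
    using D R_pos by (intro volterra_comparison[where F=F and K=K]) (auto simp: F_def K_def)
  then show ?thesis
    by (simp add: D_def)
qed

lemma risk_eq_qform: "ennreal (risk \<rho> \<theta>) = ennreal (1/2) * qform lam (\<theta> - \<theta>s)"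
proof -
  have "risk \<rho> \<theta> = 1/2 * (\<integral>z. ((\<theta> - \<theta>s) \<bullet> fst z)\<^sup>2 \<partial>\<rho>)"
    unfolding risk_def using noiseless
    by (intro arg_cong[where f="\<lambda>x. 1/2 * x"] integral_cong_AE) (auto simp: inner_diff_left)
  then have "ennreal (risk \<rho> \<theta>) = ennreal (1/2) * ennreal (\<integral>z. ((\<theta> - \<theta>s) \<bullet> fst z)\<^sup>2 \<partial>\<rho>)"
    by (simp only:) (rule ennreal_mult, auto)
  also have "ennreal (\<integral>z. ((\<theta> - \<theta>s) \<bullet> fst z)\<^sup>2 \<partial>\<rho>) = qform lam (\<theta> - \<theta>s)"
    using integrable_inner_mult_inner[of "\<theta> - \<theta>s" "\<theta> - \<theta>s"]
    by (simp add: qform_lam nn_integral_eq_integral power2_eq_square)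
  finally show ?thesis .
qed

lemma expected_risk_le:
  assumes \<beta>: "\<beta> > -1" and source: "(\<lambda>i. lam i powr (-\<beta>) * (v i \<bullet> \<theta>s)\<^sup>2) summable_on I"
    and T: "T \<ge> 1"
  shows "(\<integral>\<^sup>+\<omega>. ennreal (risk \<rho> (sgd \<gamma> \<omega> T)) \<partial>PiM UNIV (\<lambda>_::nat. \<rho>))
    \<le> ennreal (2 * source_const I lam v \<beta> \<theta>s * ((1+\<beta>) / \<gamma>) powr (1+\<beta>) / real T powr (1 + min \<alpha> \<beta>))"
proof -
  let ?X = "source_const I lam v \<beta> \<theta>s * ((1+\<beta>) / \<gamma>) powr (1+\<beta>)" and ?r = "1 + min \<alpha> \<beta>"
  have X: "0 \<le> ?X"
    using source_const_nonneg[of I lam v \<beta> \<theta>s] by simp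
  have "(\<integral>\<^sup>+\<omega>. ennreal (risk \<rho> (sgd \<gamma> \<omega> T)) \<partial>PiM UNIV (\<lambda>_. \<rho>))
      = (\<integral>\<^sup>+\<omega>. ennreal (1/2) * qform lam (sgd \<gamma> (restrict \<omega> {..<T}) T - \<theta>s) \<partial>PiM UNIV (\<lambda>_. \<rho>))"
  proof (rule nn_integral_cong)
    fix \<omega> :: "nat \<Rightarrow> 'a \<times> real"
    have "sgd \<gamma> \<omega> T = sgd \<gamma> (restrict \<omega> {..<T}) T"
      by (rule sgd_cong) simp
    then show "ennreal (risk \<rho> (sgd \<gamma> \<omega> T)) = ennreal (1/2) * qform lam (sgd \<gamma> (restrict \<omega> {..<T}) T - \<theta>s)"
      by (simp only: risk_eq_qform)
  qed
  also have "\<dots> = ennreal (1/2) * mean_qform T lam"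
    unfolding mean_qform_def using prob
    by (subst nn_integral_PiM_restrict_lessThan) (simp_all add: nn_integral_cmult)
  also have "\<dots> \<le> ennreal (1/2) * ennreal (4 * ?X * real (T+1) powr (-?r))"
    using mean_qform_lam_le[OF \<beta> source, of T] by (simp add: mult.assoc mult_left_mono)
  also have "\<dots> = ennreal (1/2 * (4 * ?X * real (T+1) powr (-?r)))"
    using X by (intro ennreal_mult[symmetric]) auto
  also have "\<dots> = ennreal (2 * ?X * real (T+1) powr (-?r))"
    by (simp add: mult.assoc)
  also have "\<dots> \<le> ennreal (2 * ?X * real T powr (-?r))"
    using T alpha \<beta> X by (intro ennreal_leI mult_left_mono powr_mono2') auto
  also have "\<dots> = ennreal (2 * ?X / real T powr ?r)"
    by (simp only: powr_minus_divide) simp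
  finally show ?thesis
    by (simp only: mult.assoc)
qed

end

theorem theorem3:
  fixes \<rho> :: "('a::{real_inner,banach,second_countable_topology} \<times> real) measure"
    and I :: "'i set" and lam :: "'i \<Rightarrow> real" and v :: "'i \<Rightarrow> 'a"
    and \<theta>s :: 'a and \<alpha> \<beta> R\<^sub>\<alpha> \<gamma> :: real and T :: nat
  assumes prob: "prob_space \<rho>"
    and sets_rho: "sets \<rho> = sets (borel :: ('a \<times> real) measure)"
    and second_moment: "integrable \<rho> (\<lambda>z. (norm (fst z))\<^sup>2)"
    and I_countable: "countable I"
    and v_orthonormal: "\<forall>i\<in>I. \<forall>j\<in>I. v i \<bullet> v j = (if i = j then 1 else 0)"
    and v_complete: "\<forall>x. ((\<lambda>i. (x \<bullet> v i) *\<^sub>R v i) has_sum x) I"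
    and eigen: "\<forall>i\<in>I. cov_op \<rho> (v i) = lam i *\<^sub>R v i"
    and lam_pos: "\<forall>i\<in>I. lam i > 0"
    and noiseless: "AE z in \<rho>. \<theta>s \<bullet> fst z = snd z"
    and alpha: "0 < \<alpha>" "\<alpha> < 1"
    and R_pos: "R\<^sub>\<alpha> > 0"
    and capacity: "capacity_cond \<rho> I lam v \<alpha> R\<^sub>\<alpha>"
    and beta: "\<beta> > -1"
    and source: "(\<lambda>i. lam i powr (-\<beta>) * (v i \<bullet> \<theta>s)\<^sup>2) summable_on I"
    and gamma_pos: "\<gamma> > 0"
    and gamma_le: "\<gamma> powr (1 - \<alpha>) \<le> 1 / (32 * xi \<alpha> * R\<^sub>\<alpha>)"
    and T: "T \<ge> 3"
  shows "(\<integral>\<^sup>+ \<omega>. ennreal (risk \<rho> (sgd \<gamma> \<omega> T)) \<partial>(PiM UNIV (\<lambda>_::nat. \<rho>)))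
           \<le> ennreal (2 * source_const I lam v \<beta> \<theta>s * ((1 + \<beta>) / \<gamma>) powr (1 + \<beta>)
                      / real T powr (1 + min \<alpha> \<beta>))"
proof -
  interpret sgd_setting \<rho> I lam v \<theta>s \<alpha> R\<^sub>\<alpha> \<gamma>
    by (intro sgd_setting.intro covariance_eigenbasis.intro sgd_setting_axioms.intro) (fact assms)+
  show ?thesis
    using expected_risk_le[OF beta source] T by simp
qed

end
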